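(* Let $p$ be a prime and let $(\mathbb{K},|\cdot|_{\mathbb{K}})$ be a valued field with $\mathbb{Q}_p\subseteq\mathbb{K}$ such that the inclusion $\mathbb{Q}_p\hookrightarrow\mathbb{K}$ is continuous. Let $f:\mathbb{Q}_p\to\mathbb{K}$ be continuous and $n\ge 0$. Then $\Delta_h^{n+1}f(x)=0$ for all $x,h\in\mathbb{Q}_p$ if and only if there are constants $a_0,\dots,a_n\in\mathbb{K}$ with $f(x)=a_0+a_1x+\cdots+a_nx^n$ for all $x\in\mathbb{Q}_p$.
   Context: $\mathbb{Q}_p$ is the field of $p$-adic numbers with its usual $p$-adic absolute value topology. $\Delta_h^{m}f(x)=\sum_{k=0}^{m}\binom{m}{k}(-1)^{m-k}f(x+kh)$. *)

theory Defs
  imports Complex_Main "HOL-Computational_Algebra.Primes"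
begin

definition abs_value :: "('a::field \<Rightarrow> real) \<Rightarrow> bool" where
  "abs_value v \<longleftrightarrow> (\<forall>x. 0 \<le> v x) \<and> (\<forall>x. v x = 0 \<longleftrightarrow> x = 0)
     \<and> (\<forall>x y. v (x * y) = v x * v y) \<and> (\<forall>x y. v (x + y) \<le> v x + v y)"

definition padic_val_rat :: "nat \<Rightarrow> rat \<Rightarrow> int" where
  "padic_val_rat p r =
     int (multiplicity (int p) (fst (quotient_of r))) - int (multiplicity (int p) (snd (quotient_of r)))"

definition padic_abs_rat :: "nat \<Rightarrow> rat \<Rightarrow> real" where
  "padic_abs_rat p r = (if r = 0 then 0 else real p powr (- real_of_int (padic_val_rat p r)))"

definition abs_continuous :: "('a::field \<Rightarrow> real) \<Rightarrow> ('b::field \<Rightarrow> real) \<Rightarrow> ('a \<Rightarrow> 'b) \<Rightarrow> bool" where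
  "abs_continuous v w f \<longleftrightarrow>
     (\<forall>x. \<forall>e>0. \<exists>d>0. \<forall>y. v (y - x) < d \<longrightarrow> w (f y - f x) < e)"

text \<open>(Q, v) is a model of the p-adic numbers Q_p: the completion of the rationals
  with respect to the p-adic absolute value, i.e. a field of characteristic 0 with an
  absolute value extending the p-adic one on the rationals, complete, and in which the
  rationals are dense.\<close>
definition is_padic_field :: "nat \<Rightarrow> ('a::field_char_0 \<Rightarrow> real) \<Rightarrow> bool" where
  "is_padic_field p v \<longleftrightarrow> abs_value v
     \<and> (\<forall>r. v (of_rat r) = padic_abs_rat p r)
     \<and> (\<forall>X::nat \<Rightarrow> 'a. (\<forall>e>0. \<exists>N. \<forall>m\<ge>N. \<forall>n\<ge>N. v (X m - X n) < e)
            \<longrightarrow> (\<exists>L. \<forall>e>0. \<exists>N. \<forall>n\<ge>N. v (X n - L) < e))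
     \<and> (\<forall>x. \<forall>e>0. \<exists>r. v (x - of_rat r) < e)"

definition field_embedding :: "('a::field \<Rightarrow> 'b::field) \<Rightarrow> bool" where
  "field_embedding \<iota> \<longleftrightarrow> \<iota> 1 = 1 \<and> (\<forall>x y. \<iota> (x + y) = \<iota> x + \<iota> y) \<and> (\<forall>x y. \<iota> (x * y) = \<iota> x * \<iota> y)"

definition fdiff :: "'a::ring_1 \<Rightarrow> nat \<Rightarrow> ('a \<Rightarrow> 'b::ring_1) \<Rightarrow> 'a \<Rightarrow> 'b" where
  "fdiff h m f x = (\<Sum>k\<le>m. of_nat (m choose k) * (-1) ^ (m - k) * f (x + of_nat k * h))"

end

theory Submission
  imports Defs "HOL-Computational_Algebra.Polynomial"
begin

section \<open>Finite differences of sequences\<close>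

definition seq_diff :: "nat \<Rightarrow> (nat \<Rightarrow> 'a::comm_ring_1) \<Rightarrow> 'a" where
  "seq_diff m g = (\<Sum>k\<le>m. of_nat (m choose k) * (-1) ^ (m - k) * g k)"

lemma fdiff_eq_seq_diff:
  fixes f :: "'a::ring_1 \<Rightarrow> 'b::comm_ring_1"
  shows "fdiff h m f x = seq_diff m (\<lambda>k. f (x + of_nat k * h))"
  unfolding fdiff_def seq_diff_def ..

lemma seq_diff_linear:
  "seq_diff m (\<lambda>k. \<Sum>j\<in>J. c j * g j k) = (\<Sum>j\<in>J. c j * seq_diff m (g j))"
  unfolding seq_diff_def
  by (simp add: sum_distrib_left mult_ac sum.swap[of _ J])

text \<open>Pascal's rule: Delta^(m+1) g = Delta^m (Delta g).\<close>
lemma seq_diff_Suc: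
  "seq_diff (Suc m) g = seq_diff m (\<lambda>k. g (Suc k) - g k)"
proof -
  have upper: "(\<Sum>k\<le>Suc m. of_nat (Suc m choose k) * (-1)^(Suc m - k) * g k)
     = (-1)^(Suc m) * g 0 + (\<Sum>k\<le>m. of_nat (m choose k) * (-1)^(m - k) * g (Suc k))
        + (\<Sum>k\<le>m. of_nat (m choose Suc k) * (-1)^(m - k) * g (Suc k))"
    by (subst sum.atMost_Suc_shift) (simp add: ring_distribs sum.distrib)
  have lower: "(-1)^(Suc m) * g 0 + (\<Sum>k\<le>m. of_nat (m choose Suc k) * (-1)^(m - k) * g (Suc k))
     = (\<Sum>k\<le>Suc m. of_nat (m choose k) * (-1)^(Suc m - k) * g k)"
    by (subst sum.atMost_Suc_shift) simp
  have sign: "(\<Sum>k\<le>Suc m. of_nat (m choose k) * (-1)^(Suc m - k) * g k)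
     = - (\<Sum>k\<le>m. of_nat (m choose k) * (-1)^(m - k) * g k)"
    by (auto simp add: sum_negf[symmetric] Suc_diff_le binomial_eq_0 intro!: sum.cong)
  show ?thesis
    unfolding seq_diff_def using upper lower sign by (simp add: algebra_simps sum_subtractf)
qed

text \<open>Delta^m annihilates the powers (u + k v)^i with i < m: by the binomial
  theorem, one difference step lowers the degree in k.\<close>
lemma seq_diff_power:
  fixes u v :: "'a::comm_ring_1"
  assumes "i < m"
  shows "seq_diff m (\<lambda>k. (u + of_nat k * v) ^ i) = 0"
  using assms
proof (induction m arbitrary: i u)
  case 0
  then show ?case by simp
next
  case (Suc m)
  have step: "(u + of_nat (Suc k) * v) ^ i - (u + of_nat k * v) ^ i
      = (\<Sum>j<i. of_nat (i choose j) * v ^ (i - j) * (u + of_nat k * v) ^ j)" for k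
  proof -
    have "(u + of_nat (Suc k) * v) ^ i = ((u + of_nat k * v) + v) ^ i"
      by (simp add: algebra_simps)
    also have "\<dots> = (\<Sum>j\<le>i. of_nat (i choose j) * (u + of_nat k * v) ^ j * v ^ (i - j))"
      by (rule binomial_ring)
    also have "\<dots> = (\<Sum>j<i. of_nat (i choose j) * v ^ (i - j) * (u + of_nat k * v) ^ j)
                    + (u + of_nat k * v) ^ i"
      by (simp add: lessThan_Suc_atMost[symmetric] mult_ac)
    finally show ?thesis by simp
  qed
  have "seq_diff (Suc m) (\<lambda>k. (u + of_nat k * v) ^ i)
      = (\<Sum>j<i. of_nat (i choose j) * v ^ (i - j) * seq_diff m (\<lambda>k. (u + of_nat k * v) ^ j))"
    by (simp only: seq_diff_Suc step seq_diff_linear)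
  also have "\<dots> = 0"
    using Suc by simp
  finally show ?case .
qed

lemma seq_diff_polynomial:
  fixes u v :: "'a::comm_ring_1"
  shows "seq_diff (Suc n) (\<lambda>k. \<Sum>i\<le>n. a i * (u + of_nat k * v) ^ i) = 0"
  by (simp add: seq_diff_linear seq_diff_power)

lemma seq_diff_top:
  assumes "\<And>k. k \<le> m \<Longrightarrow> g k = 0"
  shows "seq_diff (Suc m) g = g (Suc m)"
  using assms unfolding seq_diff_def by (simp add: sum.atMost_Suc)

lemma seq_diff_bottom:
  assumes "\<And>k. k \<le> m \<Longrightarrow> g (Suc k) = 0"
  shows "seq_diff (Suc m) g = (-1) ^ Suc m * g 0"
  using assms unfolding seq_diff_def by (subst sum.atMost_Suc_shift) simp

text \<open>Uniqueness for the recurrence Delta^(n+1) G = 0 on the integers: a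
  solution vanishing on the window {0..n} vanishes everywhere, by sliding the
  window to the right with seq_diff_top and to the left with seq_diff_bottom.\<close>
lemma recurrence_unique:
  fixes G :: "int \<Rightarrow> 'a::comm_ring_1"
  assumes rec: "\<And>x. seq_diff (Suc n) (\<lambda>k. G (x + int k)) = 0"
    and init: "\<And>j. j \<le> n \<Longrightarrow> G (int j) = 0"
  shows "G x = 0"
proof -
  have right: "\<forall>k\<le>n. G (int N + int k) = 0" for N
  proof (induction N)
    case 0
    then show ?case using init by simp
  next
    case (Suc N)
    have "G (int N + int (Suc n)) = 0"
      using rec[of "int N"] seq_diff_top[of n "\<lambda>k. G (int N + int k)"] Suc by simp
    moreover have "G (int (Suc N) + int k) = 0" if "k < n" for k
      using Suc that by (auto simp: add_ac elim!: allE[of _ "Suc k"])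
    ultimately show ?case
      by (metis add.assoc add.commute le_neq_implies_less of_nat_Suc)
  qed
  have left: "\<forall>k\<le>n. G (- int N + int k) = 0" for N
  proof (induction N)
    case 0
    then show ?case using right[of 0] by simp
  next
    case (Suc N)
    have shifted: "G (- int (Suc N) + int (Suc k)) = 0" if "k \<le> n" for k
    proof (cases "k = n")
      case True
      then show ?thesis
        using rec[of "- int (Suc N)"] seq_diff_bottom[of n "\<lambda>k. G (- int (Suc N) + int k)"] Suc
        by simp
    next
      case False
      then show ?thesis using Suc that by simp
    qed
    have "(-1) ^ Suc n * G (- int (Suc N)) = 0"
      using rec[of "- int (Suc N)"] seq_diff_bottom[of n "\<lambda>k. G (- int (Suc N) + int k)"] shifted
      by simp
    moreover have "(-1) ^ Suc n * (-1) ^ Suc n = (1::'a)"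
      by (simp flip: power_add add: power_minus_even)
    ultimately have "G (- int (Suc N)) = 0"
      by (metis mult.assoc mult_1 mult_zero_right)
    moreover have "G (- int (Suc N) + int k) = 0" if "0 < k" "k \<le> n" for k
      using shifted[of "k - 1"] that by simp
    ultimately show ?case by (metis add.right_neutral not_gr0 of_nat_0)
  qed
  show ?thesis
  proof (cases "x \<ge> 0")
    case True
    moreover have "G (int (nat x) + int 0) = 0" using right by blast
    ultimately show ?thesis by simp
  next
    case False
    moreover have "G (- int (nat (- x)) + int 0) = 0" using left by blast
    ultimately show ?thesis by simp
  qed
qed

section \<open>Polynomials and field embeddings\<close>

text \<open>Lagrange interpolation, built up one node at a time: through n + 1
  distinct nodes there is a polynomial of degree at most n with prescribed
  values.  The correction term for the new node is a multiple of the product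
  of (X - t j) over the old nodes.\<close>
lemma interpolation:
  fixes t y :: "nat \<Rightarrow> 'a::field"
  assumes "inj_on t {..n}"
  shows "\<exists>q. degree q \<le> n \<and> (\<forall>j\<le>n. poly q (t j) = y j)"
  using assms
proof (induction n)
  case 0
  show ?case by (rule exI[of _ "[:y 0:]"]) simp
next
  case (Suc n)
  have "inj_on t {..n}" using Suc.prems by (rule inj_on_subset) auto
  then obtain q where deg_q: "degree q \<le> n" and q: "\<forall>j\<le>n. poly q (t j) = y j"
    using Suc.IH by blast
  define w where "w = (\<Prod>j\<le>n. [:- t j, 1:])"
  have deg_w: "degree w \<le> Suc n"
    using degree_prod_sum_le[of "{..n}" "\<lambda>j. [:- t j, 1:]"] by (simp add: w_def)
  have poly_w: "poly w x = (\<Prod>j\<le>n. x - t j)" for x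
    unfolding w_def by (simp add: poly_prod)
  have w_old: "poly w (t j) = 0" if "j \<le> n" for j
    unfolding poly_w using that by (auto simp add: prod_zero_iff)
  have w_new: "poly w (t (Suc n)) \<noteq> 0"
    unfolding poly_w using Suc.prems by (auto simp add: prod_zero_iff dest: inj_onD)
  define q' where
    "q' = q + smult ((y (Suc n) - poly q (t (Suc n))) / poly w (t (Suc n))) w"
  have "degree q' \<le> Suc n"
    unfolding q'_def using deg_q deg_w degree_add_le degree_smult_le
    by (metis le_SucI order_trans)
  moreover have "poly q' (t j) = y j" if "j \<le> Suc n" for j
    using that q w_old w_new by (cases "j = Suc n") (auto simp: q'_def)
  ultimately show ?case by blast
qed

lemma poly_as_sum:
  fixes q :: "'a::comm_ring_1 poly"
  assumes "degree q \<le> n"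
  shows "poly q z = (\<Sum>i\<le>n. coeff q i * z ^ i)"
  unfolding poly_altdef using assms by (intro sum.mono_neutral_left) (auto simp: coeff_eq_0)

context
  fixes \<iota> :: "'a::field \<Rightarrow> 'b::field"
  assumes emb: "field_embedding \<iota>"
begin

lemma emb_add: "\<iota> (x + y) = \<iota> x + \<iota> y"
  and emb_mult: "\<iota> (x * y) = \<iota> x * \<iota> y"
  and emb_1: "\<iota> 1 = 1"
  using emb unfolding field_embedding_def by auto

lemma emb_0: "\<iota> 0 = 0"
  using emb_add[of 0 0] by (metis add.right_neutral add_left_cancel)

lemma emb_diff: "\<iota> (x - y) = \<iota> x - \<iota> y"
  using emb_add[of "x - y" y] by (simp add: eq_diff_eq)

lemma emb_of_nat: "\<iota> (of_nat k) = of_nat k"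
  by (induction k) (simp_all add: emb_0 emb_add emb_1)

lemma emb_progression: "\<iota> (x + of_nat k * h) = \<iota> x + of_nat k * \<iota> h"
  by (simp add: emb_add emb_mult emb_of_nat)

lemma emb_inj: "inj \<iota>"
proof (rule injI)
  fix x y
  assume "\<iota> x = \<iota> y"
  then have zero: "\<iota> (x - y) = 0" by (simp add: emb_diff)
  show "x = y"
  proof (rule ccontr)
    assume "x \<noteq> y"
    then have "\<iota> ((x - y) * inverse (x - y)) = 1" by (simp add: emb_1)
    with zero show False by (simp add: emb_mult)
  qed
qed

end

section \<open>Absolute values and continuity\<close>

context
  fixes v :: "'a::field \<Rightarrow> real"
  assumes av: "abs_value v"
begin

lemma av_nonneg: "0 \<le> v x"
  and av_0: "v x = 0 \<longleftrightarrow> x = 0"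
  and av_mult: "v (x * y) = v x * v y"
  and av_triangle: "v (x + y) \<le> v x + v y"
  using av unfolding abs_value_def by auto

lemma av_minus_one: "v (-1) = 1"
proof -
  have "v 1 = 1"
    using av_mult[of 1 1] av_0[of 1] by simp
  then have "v (-1) ^ 2 = 1"
    using av_mult[of "-1" "-1"] by (simp add: power2_eq_square)
  then show ?thesis
    using av_nonneg[of "-1"] power2_eq_1_iff[of "v (-1)"] by auto
qed

lemma av_commute: "v (x - y) = v (y - x)"
  using av_mult[of "-1" "x - y"] av_minus_one by simp

lemma av_reverse_triangle: "v a \<le> v b + v (a - b)"
  using av_triangle[of b "a - b"] by simp

lemma av_triangle_diff: "v (a - c) \<le> v (a - b) + v (b - c)"
  using av_triangle[of "a - b" "b - c"] by simp

end

lemma continuous_const: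
  assumes "abs_value w"
  shows "abs_continuous v w (\<lambda>x. c)"
  unfolding abs_continuous_def using av_0[OF assms, of 0] by (auto intro: exI[of _ 1])

lemma continuous_add:
  assumes w: "abs_value w" and F: "abs_continuous v w F" and G: "abs_continuous v w G"
  shows "abs_continuous v w (\<lambda>x. F x + G x)"
  unfolding abs_continuous_def
proof (intro allI impI)
  fix x and e :: real assume e: "e > 0"
  obtain d1 where d1: "d1 > 0" "\<forall>y. v (y - x) < d1 \<longrightarrow> w (F y - F x) < e/2"
    using F e unfolding abs_continuous_def by (meson half_gt_zero)
  obtain d2 where d2: "d2 > 0" "\<forall>y. v (y - x) < d2 \<longrightarrow> w (G y - G x) < e/2"
    using G e unfolding abs_continuous_def by (meson half_gt_zero)
  show "\<exists>d>0. \<forall>y. v (y - x) < d \<longrightarrow> w (F y + G y - (F x + G x)) < e"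
  proof (intro exI[of _ "min d1 d2"] conjI allI impI)
    fix y assume "v (y - x) < min d1 d2"
    then have a: "w (F y - F x) < e/2" "w (G y - G x) < e/2" using d1 d2 by auto
    have "w (F y + G y - (F x + G x)) = w ((F y - F x) + (G y - G x))" by (simp add: algebra_simps)
    also have "\<dots> \<le> w (F y - F x) + w (G y - G x)" by (rule av_triangle[OF w])
    finally show "w (F y + G y - (F x + G x)) < e" using a by linarith
  qed (use d1 d2 in auto)
qed

text \<open>For products one uses the estimate
  w(F y G y - F x G x) <= w(F y) w(G y - G x) + w(F y - F x) w(G x),
  with w(F y) bounded by w(F x) + 1 near x.\<close>
lemma continuous_mult:
  assumes w: "abs_value w" and F: "abs_continuous v w F" and G: "abs_continuous v w G"
  shows "abs_continuous v w (\<lambda>x. F x * G x)"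
  unfolding abs_continuous_def
proof (intro allI impI)
  fix x and e :: real assume e: "e > 0"
  define A where "A = w (F x) + 1"
  define B where "B = w (G x) + 1"
  have A: "A > 0" and B: "B > 0" using av_nonneg[OF w] by (auto simp: A_def B_def add_nonneg_pos)
  have eA: "e / (2 * B) > 0" using e B by simp
  have eB: "e / (2 * A) > 0" using e A by simp
  obtain d1 where d1: "d1 > 0" "\<forall>y. v (y - x) < d1 \<longrightarrow> w (F y - F x) < min 1 (e / (2 * B))"
    using F eA unfolding abs_continuous_def by (metis min_less_iff_conj zero_less_one)
  obtain d2 where d2: "d2 > 0" "\<forall>y. v (y - x) < d2 \<longrightarrow> w (G y - G x) < e / (2 * A)"
    using G eB unfolding abs_continuous_def by meson
  show "\<exists>d>0. \<forall>y. v (y - x) < d \<longrightarrow> w (F y * G y - F x * G x) < e"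
  proof (intro exI[of _ "min d1 d2"] conjI allI impI)
    fix y assume "v (y - x) < min d1 d2"
    then have a: "w (F y - F x) < min 1 (e / (2 * B))" "w (G y - G x) < e / (2 * A)" using d1 d2 by auto
    have Fy: "w (F y) \<le> A" using av_reverse_triangle[OF w, of "F y" "F x"] a(1) by (simp add: A_def)
    have t1: "w (F y) * w (G y - G x) \<le> A * (e / (2 * A))"
      using Fy a(2) av_nonneg[OF w, of "F y"] av_nonneg[OF w, of "G y - G x"] A by (intro mult_mono) auto
    have "w (F y - F x) * w (G x) \<le> w (F y - F x) * B"
      using av_nonneg[OF w] by (intro mult_left_mono) (auto simp: B_def)
    also have "\<dots> < (e / (2 * B)) * B"
      using a(1) B by (intro mult_strict_right_mono) auto
    finally have t2: "w (F y - F x) * w (G x) < (e / (2 * B)) * B" .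
    have "w (F y * G y - F x * G x) = w (F y * (G y - G x) + (F y - F x) * G x)" by (simp add: algebra_simps)
    also have "\<dots> \<le> w (F y) * w (G y - G x) + w (F y - F x) * w (G x)"
      using av_triangle[OF w, of "F y * (G y - G x)" "(F y - F x) * G x"] by (simp add: av_mult[OF w])
    also have "\<dots> < A * (e / (2 * A)) + (e / (2 * B)) * B" using t1 t2 by linarith
    also have "\<dots> = e" using A B by simp
    finally show "w (F y * G y - F x * G x) < e" .
  qed (use d1 d2 in auto)
qed

lemma continuous_poly:
  assumes w: "abs_value w" and I: "abs_continuous v w \<iota>"
  shows "abs_continuous v w (\<lambda>x. poly q (\<iota> x))"
proof (induction q)
  case 0 then show ?case using continuous_const[OF w] by simp
next
  case (pCons a p)
  have "abs_continuous v w (\<lambda>x. a + \<iota> x * poly p (\<iota> x))"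
    by (intro continuous_add[OF w] continuous_mult[OF w] continuous_const[OF w] I pCons.IH)
  then show ?case by simp
qed

lemma continuous_eq_on_rationals:
  assumes P: "is_padic_field p vQ" and w: "abs_value w"
    and F: "abs_continuous vQ w F" and G: "abs_continuous vQ w G"
    and eq: "\<And>r. F (of_rat r) = G (of_rat r)"
  shows "F x = G x"
proof (rule ccontr)
  assume ne: "F x \<noteq> G x"
  define e where "e = w (F x - G x)"
  have e: "e > 0" using ne av_0[OF w] av_nonneg[OF w] by (simp add: e_def order_less_le)
  obtain d1 where d1: "d1 > 0" "\<forall>y. vQ (y - x) < d1 \<longrightarrow> w (F y - F x) < e/2"
    using F e unfolding abs_continuous_def by (meson half_gt_zero)
  obtain d2 where d2: "d2 > 0" "\<forall>y. vQ (y - x) < d2 \<longrightarrow> w (G y - G x) < e/2"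
    using G e unfolding abs_continuous_def by (meson half_gt_zero)
  have avQ: "abs_value vQ" and dense: "\<forall>x. \<forall>e>0. \<exists>r. vQ (x - of_rat r) < e"
    using P unfolding is_padic_field_def by auto
  obtain r where r: "vQ (x - of_rat r) < min d1 d2" using dense d1 d2 by (meson min_less_iff_conj)
  hence "vQ (of_rat r - x) < min d1 d2" by (simp add: av_commute[OF avQ])
  hence a: "w (F (of_rat r) - F x) < e/2" "w (G (of_rat r) - G x) < e/2" using d1 d2 by auto
  have "e = w (F x - G x)" by (simp add: e_def)
  also have "\<dots> \<le> w (F x - F (of_rat r)) + w (F (of_rat r) - G x)" by (rule av_triangle_diff[OF w])
  also have "\<dots> = w (F (of_rat r) - F x) + w (G (of_rat r) - G x)"
    by (simp add: eq av_commute[OF w, of "F x"])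
  finally show False using a by linarith
qed

section \<open>The Frechet equation on lattices and on the rationals\<close>

text \<open>On a lattice Z*h, a solution of Delta_h^(n+1) f = 0 coincides with the
  interpolant of its values at 0, h, ..., n*h: the difference of the two
  satisfies the recurrence and vanishes on the initial window.\<close>
lemma lattice_interpolant:
  fixes \<iota> :: "'a::field_char_0 \<Rightarrow> 'b::field" and f :: "'a \<Rightarrow> 'b"
  assumes emb: "field_embedding \<iota>"
    and frechet: "\<And>x. fdiff h (Suc n) f x = 0"
    and "h \<noteq> 0"
  shows "\<exists>q. degree q \<le> n \<and> (\<forall>k::int. f (of_int k * h) = poly q (\<iota> (of_int k * h)))"
proof -
  have "inj_on (\<lambda>j. \<iota> (of_nat j * h)) {..n}"
    using emb_inj[OF emb] \<open>h \<noteq> 0\<close> by (auto intro!: inj_onI dest: injD)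
  then obtain q where deg: "degree q \<le> n"
    and nodes: "\<And>j. j \<le> n \<Longrightarrow> poly q (\<iota> (of_nat j * h)) = f (of_nat j * h)"
    using interpolation[of "\<lambda>j. \<iota> (of_nat j * h)" n "\<lambda>j. f (of_nat j * h)"] by blast
  define G where "G k = f (of_int k * h) - poly q (\<iota> (of_int k * h))" for k
  have "G k = 0" for k
  proof (rule recurrence_unique[of n G])
    fix x
    have progression: "of_int (x + int k) * h = of_int x * h + of_nat k * h" for k
      by (simp add: algebra_simps)
    have "seq_diff (Suc n) (\<lambda>k. G (x + int k))
        = fdiff h (Suc n) f (of_int x * h)
          - seq_diff (Suc n) (\<lambda>k. \<Sum>i\<le>n. coeff q i * (\<iota> (of_int x * h) + of_nat k * \<iota> h) ^ i)"
      unfolding G_def progression emb_progression[OF emb] fdiff_eq_seq_diff poly_as_sum[OF deg]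
      by (simp add: seq_diff_def sum_subtractf algebra_simps)
    then show "seq_diff (Suc n) (\<lambda>k. G (x + int k)) = 0"
      by (simp only: frechet seq_diff_polynomial) simp
  next
    fix j assume "j \<le> n"
    then show "G (int j) = 0" using nodes by (simp add: G_def)
  qed
  then show ?thesis using deg by (auto simp: G_def)
qed

text \<open>The interpolants for the lattices Z/b all agree with the interpolant for
  Z (they agree at the n + 1 points 0, ..., n), so a single polynomial
  represents f on all of the rationals.\<close>
lemma rational_interpolant:
  fixes \<iota> :: "'a::field_char_0 \<Rightarrow> 'b::field" and f :: "'a \<Rightarrow> 'b"
  assumes emb: "field_embedding \<iota>"
    and frechet: "\<And>x h. fdiff h (Suc n) f x = 0"
  shows "\<exists>q. degree q \<le> n \<and> (\<forall>r. f (of_rat r) = poly q (\<iota> (of_rat r)))"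
proof -
  obtain q where deg: "degree q \<le> n" and on_ints: "\<And>k::int. f (of_int k) = poly q (\<iota> (of_int k))"
    using lattice_interpolant[OF emb frechet, of 1] by auto
  have "f (of_rat r) = poly q (\<iota> (of_rat r))" for r
  proof -
    obtain a b where ab: "quotient_of r = (a, b)" by fastforce
    have "b > 0" using quotient_of_denom_pos[OF ab] .
    define h :: 'a where "h = inverse (of_int b)"
    have "of_rat r = (of_int a / of_int b :: 'a)"
      using quotient_of_div[OF ab] by (simp add: of_rat_divide)
    then have r: "of_rat r = of_int a * h" by (simp add: h_def divide_inverse)
    obtain q' where deg': "degree q' \<le> n"
      and on_lattice: "\<And>k::int. f (of_int k * h) = poly q' (\<iota> (of_int k * h))"
      using lattice_interpolant[OF emb frechet, of h] \<open>b > 0\<close> by (auto simp: h_def)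
    define A where "A = (\<lambda>j. \<iota> (of_nat j)) ` {..n}"
    have "q' = q"
    proof (rule poly_eqI_degree[of A])
      fix z assume "z \<in> A"
      then obtain j where z: "z = \<iota> (of_nat j)" by (auto simp: A_def)
      have node: "of_int (int j * b) * h = (of_nat j :: 'a)"
        using \<open>b > 0\<close> by (simp add: h_def)
      have "f (of_nat j) = poly q' z"
        using on_lattice[of "int j * b"] unfolding node z .
      then show "poly q' z = poly q z"
        using on_ints[of "int j"] z by simp
    next
      have "card A = Suc n"
        unfolding A_def using emb_inj[OF emb]
        by (subst card_image) (auto intro!: inj_onI dest: injD)
      then show "degree q' < card A" "degree q < card A" using deg deg' by auto
    qed
    then show ?thesis using on_lattice[of a] r by simp
  qed
  then show ?thesis using deg by blast
qed

theorem theorem6: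
  fixes p :: nat and vQ :: "'q::field_char_0 \<Rightarrow> real" and vK :: "'k::field \<Rightarrow> real"
    and \<iota> :: "'q \<Rightarrow> 'k" and f :: "'q \<Rightarrow> 'k" and n :: nat
  assumes "prime p"
    and "is_padic_field p vQ"
    and "abs_value vK"
    and "field_embedding \<iota>"
    and "abs_continuous vQ vK \<iota>"
    and "abs_continuous vQ vK f"
  shows "(\<forall>x h. fdiff h (n + 1) f x = 0) \<longleftrightarrow>
         (\<exists>a :: nat \<Rightarrow> 'k. \<forall>x. f x = (\<Sum>k\<le>n. a k * \<iota> x ^ k))"
proof
  assume "\<forall>x h. fdiff h (n + 1) f x = 0"
  then have "\<And>x h. fdiff h (Suc n) f x = 0" by simp
  then obtain q where deg: "degree q \<le> n" and rat: "\<And>r. f (of_rat r) = poly q (\<iota> (of_rat r))"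
    using rational_interpolant[OF assms(4)] by blast
  have "f x = poly q (\<iota> x)" for x
    using continuous_eq_on_rationals[OF assms(2,3,6) continuous_poly[OF assms(3,5)] rat] .
  then show "\<exists>a. \<forall>x. f x = (\<Sum>k\<le>n. a k * \<iota> x ^ k)"
    using poly_as_sum[OF deg] by auto
next
  assume "\<exists>a. \<forall>x. f x = (\<Sum>k\<le>n. a k * \<iota> x ^ k)"
  then obtain a where a: "\<And>x. f x = (\<Sum>k\<le>n. a k * \<iota> x ^ k)" by blast
  show "\<forall>x h. fdiff h (n + 1) f x = 0"
    by (simp add: fdiff_eq_seq_diff a emb_progression[OF assms(4)] seq_diff_polynomial
        flip: Suc_eq_plus1)
qed

end
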